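(* Let $K$ be a $\lambda$-fat convex body in the plane, $\lambda\in(0,1]$. Then its geometric dilation satisfies \[\delta(K)\le\min\{\pi\lambda^{-1},\;2(\lambda^{-1}+1)\}.\]
   Context: The width of a convex body $K$ is the minimum width of a parallel slab containing $K$; $K$ is $\lambda$-fat if ${\rm width}(K)/{\rm diam}_2(K)\ge\lambda$. For $s,t\in\partial K$, let ${\rm geod}(s,t)$ be the length of the shorter of the two arcs of $\partial K$ between $s$ and $t$. The geometric dilation of $K$ is $\delta(K)=\sup_{s,t\in\partial K,\,s\ne t}{\rm geod}(s,t)/|st|$. *)

theory Defs
  imports "HOL-Analysis.Analysis"
begin

definition convex_body :: "(real^2) set \<Rightarrow> bool" where
  "convex_body K \<longleftrightarrow> compact K \<and> convex K \<and> interior K \<noteq> {}"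

definition width :: "(real^2) set \<Rightarrow> real" where
  "width K = Inf {b - a | u a b. norm u = 1 \<and> K \<subseteq> {x. a \<le> u \<bullet> x \<and> u \<bullet> x \<le> b}}"

definition fat :: "real \<Rightarrow> (real^2) set \<Rightarrow> bool" where
  "fat l K \<longleftrightarrow> width K / diameter K \<ge> l"

definition curve_length :: "(real \<Rightarrow> real^2) \<Rightarrow> ereal" where
  "curve_length g = (SUP (n, t) \<in> {(n, t). t 0 = (0::real) \<and> t n = 1 \<and> (\<forall>i<n. t i \<le> t (Suc i))}.
       ereal (\<Sum>i<n. dist (g (t i)) (g (t (Suc i)))))"

text \<open>geod(s,t): length of the shorter of the two arcs of the boundary between s and t,
  i.e. the minimum length over all arcs contained in the boundary joining s to t.\<close>
definition geod :: "(real^2) set \<Rightarrow> real^2 \<Rightarrow> real^2 \<Rightarrow> ereal" where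
  "geod K s t = (INF g \<in> {g. arc g \<and> path_image g \<subseteq> frontier K \<and> pathstart g = s \<and> pathfinish g = t}.
       curve_length g)"

definition geometric_dilation :: "(real^2) set \<Rightarrow> ereal" where
  "geometric_dilation K = (SUP (s, t) \<in> {(s, t). s \<in> frontier K \<and> t \<in> frontier K \<and> s \<noteq> t}.
       geod K s t / ereal (dist s t))"

end

theory Submission
  imports Defs
begin

text \<open>Let \<open>s \<noteq> t\<close> be boundary points of \<open>K\<close>, \<open>L = |st|\<close>, \<open>D\<close> the diameter and \<open>w\<close> the width.
  If \<open>K\<close> lies on one side of the line \<open>st\<close>, the segment \<open>st\<close> is a boundary arc. Otherwise the
  supporting lines at \<open>s\<close> and \<open>t\<close> are transversal to \<open>st\<close>; on the side where they converge,
  the boundary is the graph over the chord, taken in the mean direction \<open>v\<close> of the two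
  supporting lines, of a concave function \<open>h \<ge> 0\<close>, completed by segments of the supporting lines.
  Since \<open>h\<close> is concave, this boundary arc has length at most \<open>L + 2 |v| max h\<close>. The cap lies in
  the triangle cut off by the supporting lines and \<open>K\<close> lies within \<open>D\<close> of the top of the cap;
  comparing \<open>w\<close> with the widths of \<open>K\<close> orthogonal to the supporting lines gives
  \<open>|v| max h \<cdot> w \<le> D L\<close>. Hence \<open>geod(s, t) \<le> (1 + 2 D / w) L \<le> (1 + 2 / \<lambda>) L\<close>, and
  \<open>1 + 2 / \<lambda> \<le> min (\<pi> / \<lambda>) (2 / \<lambda> + 2)\<close> because \<open>\<lambda> \<le> 1 < \<pi> - 2\<close>.\<close>

section \<open>Lengths of curves\<close>

lemma partition_mono:
  fixes tt :: "nat \<Rightarrow> real"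
  assumes "\<forall>i<n. tt i \<le> tt (Suc i)" and "i \<le> j" and "j \<le> n"
  shows "tt i \<le> tt j"
  using assms(2,3)
proof (induction j)
  case (Suc j)
  then show ?case
    using assms(1) by (cases "i = Suc j") (auto intro: order.trans[of _ "tt j"])
qed simp

lemma partition_in_unit:
  fixes tt :: "nat \<Rightarrow> real"
  assumes "tt 0 = 0" and "tt n = 1" and "\<forall>i<n. tt i \<le> tt (Suc i)" and "i \<le> n"
  shows "tt i \<in> {0..1}"
  using partition_mono[OF assms(3), of 0 i] partition_mono[OF assms(3), of i n] assms by auto

lemma variation_mono:
  fixes f :: "real \<Rightarrow> real" and tt :: "nat \<Rightarrow> real"
  assumes "\<forall>i<n. tt i \<le> tt (Suc i)" and "mono f"
  shows "(\<Sum>i<n. \<bar>f (tt (Suc i)) - f (tt i)\<bar>) = f (tt n) - f (tt 0)"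
proof -
  have "(\<Sum>i<n. \<bar>f (tt (Suc i)) - f (tt i)\<bar>) = (\<Sum>i<n. f (tt (Suc i)) - f (tt i))"
    using assms by (intro sum.cong) (auto dest: monoD)
  also have "\<dots> = f (tt n) - f (tt 0)"
    by (rule sum_lessThan_telescope)
  finally show ?thesis .
qed

text \<open>A quasi-concave function increases and then decreases.\<close>
lemma variation_quasiconcave_le:
  fixes f :: "real \<Rightarrow> real" and tt :: "nat \<Rightarrow> real"
  assumes mono: "\<forall>i<n. tt i \<le> tt (Suc i)"
    and range: "\<forall>i\<le>n. tt i \<in> {0..1}"
    and qc: "\<And>x y z. 0 \<le> x \<Longrightarrow> x \<le> y \<Longrightarrow> y \<le> z \<Longrightarrow> z \<le> 1 \<Longrightarrow> min (f x) (f z) \<le> f y"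
    and bound: "\<And>x. x \<in> {0..1} \<Longrightarrow> f x \<le> R"
  shows "(\<Sum>i<n. \<bar>f (tt (Suc i)) - f (tt i)\<bar>) \<le> 2 * R - f (tt 0) - f (tt n)"
  using mono range
proof (induction n)
  case 0
  then show ?case using bound[of "tt 0"] by simp
next
  case (Suc n)
  have IH: "(\<Sum>i<n. \<bar>f (tt (Suc i)) - f (tt i)\<bar>) \<le> 2 * R - f (tt 0) - f (tt n)"
    using Suc by auto
  have tt_mono: "\<And>i j. i \<le> j \<Longrightarrow> j \<le> Suc n \<Longrightarrow> tt i \<le> tt j"
    using partition_mono[OF Suc.prems(1)] by blast
  have tt_range: "\<And>i. i \<le> Suc n \<Longrightarrow> 0 \<le> tt i \<and> tt i \<le> 1"
    using Suc.prems(2) by auto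
  show ?case
  proof (cases "f (tt (Suc n)) \<le> f (tt n)")
    case True
    then show ?thesis using IH by simp
  next
    case False
    have increasing: "f (tt i) \<le> f (tt (Suc i))" if "i < n" for i
    proof -
      have "min (f (tt i)) (f (tt (Suc n))) \<le> f (tt (Suc i))"
        using qc tt_range[of i] tt_range[of "Suc n"] tt_mono[of i "Suc i"] tt_mono[of "Suc i" "Suc n"] that
        by auto
      moreover have "min (f (tt (Suc i))) (f (tt (Suc n))) \<le> f (tt n)"
        using qc tt_range[of "Suc i"] tt_range[of "Suc n"] tt_mono[of "Suc i" n] tt_mono[of n "Suc n"] that
        by auto
      ultimately show ?thesis using False by (auto simp: min_def split: if_splits)
    qed
    have "(\<Sum>i<n. \<bar>f (tt (Suc i)) - f (tt i)\<bar>) = (\<Sum>i<n. f (tt (Suc i)) - f (tt i))"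
      using increasing by (intro sum.cong) auto
    also have "\<dots> = f (tt n) - f (tt 0)"
      by (rule sum_lessThan_telescope)
    finally show ?thesis
      using False bound[of "tt (Suc n)"] tt_range[of "Suc n"] by simp
  qed
qed

lemma curve_length_leI:
  assumes "\<And>n tt. tt 0 = 0 \<Longrightarrow> tt n = 1 \<Longrightarrow> \<forall>i<n. tt i \<le> tt (Suc i) \<Longrightarrow>
     (\<Sum>i<n. dist (g (tt i)) (g (tt (Suc i)))) \<le> B"
  shows "curve_length g \<le> ereal B"
  unfolding curve_length_def using assms by (auto intro!: SUP_least)

lemma curve_length_sheared_graph_le:
  fixes s t v :: "real^2" and X Y :: "real \<Rightarrow> real"
  assumes g: "\<And>x. g x = s + X x *\<^sub>R (t - s) + Y x *\<^sub>R v"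
    and X_mono: "\<And>x y. 0 \<le> x \<Longrightarrow> x \<le> y \<Longrightarrow> y \<le> 1 \<Longrightarrow> X x \<le> X y"
    and X0: "X 0 = 0" and X1: "X 1 = 1"
    and Y_variation: "\<And>n tt. tt 0 = 0 \<Longrightarrow> tt n = 1 \<Longrightarrow> \<forall>i<n. tt i \<le> tt (Suc i) \<Longrightarrow>
       (\<Sum>i<n. \<bar>Y (tt (Suc i)) - Y (tt i)\<bar>) \<le> V"
  shows "curve_length g \<le> ereal (dist s t + norm v * V)"
proof (rule curve_length_leI)
  fix n and tt :: "nat \<Rightarrow> real"
  assume tt: "tt 0 = 0" "tt n = 1" "\<forall>i<n. tt i \<le> tt (Suc i)"
  define dX where "dX i = X (tt (Suc i)) - X (tt i)" for i
  define dY where "dY i = Y (tt (Suc i)) - Y (tt i)" for i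
  have step: "dist (g (tt i)) (g (tt (Suc i))) \<le> dX i * dist s t + norm v * \<bar>dY i\<bar>"
    if "i < n" for i
  proof -
    have "0 \<le> dX i"
      using X_mono partition_in_unit[OF tt, of i] partition_in_unit[OF tt, of "Suc i"] tt(3) that
      by (auto simp: dX_def)
    moreover have "g (tt (Suc i)) - g (tt i) = dX i *\<^sub>R (t - s) + dY i *\<^sub>R v"
      by (simp add: g dX_def dY_def algebra_simps)
    then have "dist (g (tt i)) (g (tt (Suc i))) = norm (dX i *\<^sub>R (t - s) + dY i *\<^sub>R v)"
      by (metis dist_commute dist_norm)
    ultimately show ?thesis
      using norm_triangle_ineq[of "dX i *\<^sub>R (t - s)" "dY i *\<^sub>R v"]
      by (simp add: dist_norm norm_minus_commute mult.commute)
  qed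
  have "(\<Sum>i<n. dist (g (tt i)) (g (tt (Suc i)))) \<le> (\<Sum>i<n. dX i * dist s t + norm v * \<bar>dY i\<bar>)"
    using step by (intro sum_mono) auto
  also have "\<dots> = (\<Sum>i<n. dX i) * dist s t + norm v * (\<Sum>i<n. \<bar>dY i\<bar>)"
    by (simp add: sum.distrib sum_distrib_left sum_distrib_right)
  also have "(\<Sum>i<n. dX i) = 1"
    using sum_lessThan_telescope[of "\<lambda>i. X (tt i)" n] tt X0 X1 by (simp add: dX_def)
  also have "norm v * (\<Sum>i<n. \<bar>dY i\<bar>) \<le> norm v * V"
    using Y_variation[OF tt] by (intro mult_left_mono) (auto simp: dY_def)
  finally show "(\<Sum>i<n. dist (g (tt i)) (g (tt (Suc i)))) \<le> dist s t + norm v * V"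
    by simp
qed

lemma curve_length_linepath_le: "curve_length (linepath s t) \<le> ereal (dist s t)"
  using curve_length_sheared_graph_le[of "linepath s t" s "\<lambda>x. x" t "\<lambda>x. 0" 0 0]
  by (simp add: linepath_def algebra_simps)

section \<open>Width, frontier and supporting lines\<close>

lemma width_mult_norm_le:
  fixes K :: "(real^2) set"
  assumes "p \<noteq> 0" and "K \<noteq> {}" and "\<And>x. x \<in> K \<Longrightarrow> lo \<le> p \<bullet> x \<and> p \<bullet> x \<le> hi"
  shows "width K * norm p \<le> hi - lo"
proof -
  define w where "w = p /\<^sub>R norm p"
  have np: "0 < norm p" using assms(1) by simp
  have slab: "K \<subseteq> {x. lo / norm p \<le> w \<bullet> x \<and> w \<bullet> x \<le> hi / norm p}"
    using assms(3) np by (auto simp: w_def field_simps)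
  have "norm w = 1" using np by (simp add: w_def)
  then have member: "hi / norm p - lo / norm p
      \<in> {b - a | u a b. norm u = 1 \<and> K \<subseteq> {x. a \<le> u \<bullet> x \<and> u \<bullet> x \<le> b}}"
    using slab by blast
  have "bdd_below {b - a | u a b. norm u = 1 \<and> K \<subseteq> {x. a \<le> u \<bullet> x \<and> u \<bullet> x \<le> b}}"
    using assms(2) by (intro bdd_belowI[of _ 0]) force
  then have "width K \<le> hi / norm p - lo / norm p"
    unfolding width_def using member by (rule cInf_lower[rotated])
  then show ?thesis using np by (simp add: diff_divide_distrib[symmetric] pos_le_divide_eq)
qed

lemma linear_maximizer_in_frontier:
  fixes K :: "'a::real_inner set"
  assumes "closed K" and "x \<in> K" and "c \<noteq> 0" and "\<And>y. y \<in> K \<Longrightarrow> c \<bullet> y \<le> c \<bullet> x"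
  shows "x \<in> frontier K"
proof -
  have "x \<notin> interior K"
  proof
    assume "x \<in> interior K"
    then obtain e where "0 < e" "cball x e \<subseteq> K"
      using mem_interior_cball by blast
    moreover have "x + (e / norm c) *\<^sub>R c \<in> cball x e"
      using \<open>0 < e\<close> by (simp add: dist_norm)
    ultimately have "c \<bullet> (x + (e / norm c) *\<^sub>R c) \<le> c \<bullet> x"
      using assms(4) by blast
    then have "e * norm c \<le> 0"
      using assms(3) by (simp add: inner_add_right power2_norm_eq_inner[symmetric] power2_eq_square)
    then show False
      using \<open>0 < e\<close> assms(3) by (simp add: mult_le_0_iff)
  qed
  then show ?thesis
    using assms(1,2) by (simp add: frontier_def closure_closed)
qed

lemma closed_segment_subset_frontier:
  fixes K :: "'a::real_inner set"
  assumes "closed K" and "convex K" and "s \<in> K" and "t \<in> K" and "n \<noteq> 0"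
    and "n \<bullet> t = n \<bullet> s" and "\<And>x. x \<in> K \<Longrightarrow> n \<bullet> s \<le> n \<bullet> x"
  shows "closed_segment s t \<subseteq> frontier K"
proof
  fix z assume z: "z \<in> closed_segment s t"
  then obtain l where zl: "z = (1 - l) *\<^sub>R s + l *\<^sub>R t"
    by (auto simp: in_segment)
  have "n \<bullet> z = n \<bullet> s"
    unfolding zl using assms(6) by (simp add: inner_add_right algebra_simps)
  moreover have "z \<in> K"
    using z assms(2-4) closed_segment_subset by blast
  ultimately show "z \<in> frontier K"
    using assms by (intro linear_maximizer_in_frontier[where c = "- n"]) auto
qed

lemma interior_step_in:
  fixes K :: "'a::real_normed_vector set"
  assumes "x \<in> interior K"
  obtains d where "0 < d" and "x + d *\<^sub>R w \<in> K"
proof -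
  obtain e where e: "0 < e" "cball x e \<subseteq> K"
    using assms mem_interior_cball by blast
  have "norm ((e / (norm w + 1)) *\<^sub>R w) \<le> e"
  proof -
    have "norm w \<le> norm w + 1" by simp
    then show ?thesis
      using e(1) by (simp add: divide_simps mult_left_mono add_nonneg_pos)
  qed
  then have "x + (e / (norm w + 1)) *\<^sub>R w \<in> K"
    using e(2) by (auto simp: dist_norm)
  moreover have "0 < e / (norm w + 1)"
    using e(1) by (simp add: add_nonneg_pos)
  ultimately show thesis using that by blast
qed

lemma orthonormal_frame_real2:
  fixes u :: "real^2"
  assumes "norm u = 1"
  obtains n where "norm n = 1" and "n \<bullet> u = 0"
    and "\<And>p z. p \<bullet> z = (p \<bullet> u) * (z \<bullet> u) + (p \<bullet> n) * (z \<bullet> n)"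
proof
  define n :: "real^2" where "n = (\<chi> i. if i = 1 then - (u$2) else u$1)"
  have uu: "u$1 * u$1 + u$2 * u$2 = 1"
    using assms by (simp add: norm_eq_1 inner_vec_def sum_2)
  show "norm n = 1"
    using uu by (simp add: n_def norm_eq_1 inner_vec_def sum_2 algebra_simps)
  show "n \<bullet> u = 0"
    by (simp add: n_def inner_vec_def sum_2)
  fix p z :: "real^2"
  have "(p \<bullet> u) * (z \<bullet> u) + (p \<bullet> n) * (z \<bullet> n)
      = (p$1 * z$1 + p$2 * z$2) * (u$1 * u$1 + u$2 * u$2)"
    by (simp add: n_def inner_vec_def sum_2 algebra_simps)
  then show "p \<bullet> z = (p \<bullet> u) * (z \<bullet> u) + (p \<bullet> n) * (z \<bullet> n)"
    using uu by (simp add: inner_vec_def sum_2)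
qed

lemma chord_coordinates:
  fixes s t :: "real^2"
  assumes "s \<noteq> t"
  obtains u n where "t - s = dist s t *\<^sub>R u" and "u \<bullet> u = 1" and "n \<bullet> n = 1" and "u \<bullet> n = 0"
    and "\<And>p z. p \<bullet> z = (p \<bullet> u) * (z \<bullet> u) + (p \<bullet> n) * (z \<bullet> n)"
proof -
  define u where "u = (1 / dist s t) *\<^sub>R (t - s)"
  have chord: "t - s = dist s t *\<^sub>R u" and "norm u = 1"
    using assms by (simp_all add: u_def dist_norm norm_minus_commute)
  obtain n where "norm n = 1" "n \<bullet> u = 0"
    and frame: "\<And>p z. p \<bullet> z = (p \<bullet> u) * (z \<bullet> u) + (p \<bullet> n) * (z \<bullet> n)"
    using orthonormal_frame_real2[OF \<open>norm u = 1\<close>] by blast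
  show thesis
  proof (rule that[OF chord _ _ _ frame])
    show "u \<bullet> u = 1" "n \<bullet> n = 1" "u \<bullet> n = 0"
      using \<open>norm u = 1\<close> \<open>norm n = 1\<close> \<open>n \<bullet> u = 0\<close> by (simp_all add: norm_eq_1 inner_commute)
  qed
qed

lemma supporting_line_slope_pos:
  fixes \<alpha> \<beta> :: real
  assumes "\<alpha> \<noteq> 0 \<or> \<beta> \<noteq> 0" and "0 < r" and "0 \<le> \<alpha> * r"
    and "0 \<le> \<alpha> * xa + \<beta> * ya" and "0 < ya" and "0 \<le> \<alpha> * xb + \<beta> * yb" and "yb < 0"
  shows "0 < \<alpha>"
proof -
  have "0 \<le> \<alpha>"
    using assms(2,3) by (simp add: zero_le_mult_iff)
  moreover have "\<alpha> \<noteq> 0"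
  proof
    assume "\<alpha> = 0"
    then show False
      using assms(1,4-7) by (cases "0 < \<beta>") (auto simp: zero_le_mult_iff)
  qed
  ultimately show ?thesis by simp
qed

text \<open>As \<open>K\<close> has points strictly on both sides of the line through \<open>p\<close> in direction \<open>u\<close>,
  every supporting line of \<open>K\<close> at \<open>p\<close> is transversal to it.\<close>
lemma supporting_line_slope:
  fixes K :: "'a::euclidean_space set"
  assumes "convex K" and "closed K" and "interior K \<noteq> {}" and "p \<in> frontier K"
    and frame: "\<And>c z. c \<bullet> z = (c \<bullet> u) * (z \<bullet> u) + (c \<bullet> n) * (z \<bullet> n)"
    and "q \<in> K" and "0 < (q - p) \<bullet> u" and "(q - p) \<bullet> n = 0"
    and "x1 \<in> K" and "0 < (x1 - p) \<bullet> n" and "x2 \<in> K" and "(x2 - p) \<bullet> n < 0"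
  obtains a where "\<And>y. y \<in> K \<Longrightarrow> a * ((y - p) \<bullet> n) \<le> (y - p) \<bullet> u"
proof -
  have "p \<in> closure K" "p \<notin> rel_interior K"
    using assms(2-4) rel_interior_nonempty_interior[OF assms(3)]
    by (auto simp: frontier_def closure_closed)
  then obtain c where "c \<noteq> 0" and c: "\<And>y. y \<in> closure K \<Longrightarrow> c \<bullet> p \<le> c \<bullet> y"
    using supporting_hyperplane_relative_frontier[OF assms(1)] by metis
  have half: "0 \<le> (c \<bullet> u) * ((y - p) \<bullet> u) + (c \<bullet> n) * ((y - p) \<bullet> n)" if "y \<in> K" for y
  proof -
    have "0 \<le> c \<bullet> (y - p)"
      using c[of y] that closure_subset by (force simp: inner_diff_right)
    then show ?thesis by (simp only: frame[of c "y - p"])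
  qed
  have "c \<bullet> c \<noteq> 0"
    using \<open>c \<noteq> 0\<close> by simp
  then have "c \<bullet> u \<noteq> 0 \<or> c \<bullet> n \<noteq> 0"
    by (subst (asm) frame) auto
  moreover have "0 \<le> (c \<bullet> u) * ((q - p) \<bullet> u)"
    using half[OF \<open>q \<in> K\<close>] assms(8) by simp
  ultimately have cu: "0 < c \<bullet> u"
    using supporting_line_slope_pos assms(7,10,12) half[OF \<open>x1 \<in> K\<close>] half[OF \<open>x2 \<in> K\<close>]
    by blast
  show thesis
  proof
    fix y assume "y \<in> K"
    then show "- (c \<bullet> n) / (c \<bullet> u) * ((y - p) \<bullet> n) \<le> (y - p) \<bullet> u"
      using half[OF \<open>y \<in> K\<close>] cu by (simp add: field_simps)
  qed
qed

section \<open>The cap over a chord\<close>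

text \<open>The local picture near a chord \<open>st\<close> of \<open>K\<close> of length \<open>L\<close>: in the coordinates
  \<open>X = (x - s) \<bullet> u\<close>, \<open>Y = (x - s) \<bullet> n\<close>, the body lies between the supporting lines \<open>X = a Y\<close>
  at \<open>s\<close> and \<open>X = L - b Y\<close> at \<open>t\<close>, which meet, if at all, on the side \<open>Y > 0\<close>.\<close>
locale chord_frame =
  fixes K :: "(real^2) set" and s t u n :: "real^2" and L a b :: real
  assumes convex: "convex K" and compact: "compact K"
    and s_in: "s \<in> K" and t_in: "t \<in> K"
    and chord: "t - s = L *\<^sub>R u" and L_pos: "0 < L"
    and u_unit: "u \<bullet> u = 1" and n_unit: "n \<bullet> n = 1" and u_n: "u \<bullet> n = 0"
    and between_supports:
      "\<And>x. x \<in> K \<Longrightarrow> a * ((x - s) \<bullet> n) \<le> (x - s) \<bullet> u \<and> (x - s) \<bullet> u \<le> L - b * ((x - s) \<bullet> n)"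
    and supports_converge: "0 \<le> a + b"
begin

definition "abscissa x = (x - s) \<bullet> u"
definition "ordinate x = (x - s) \<bullet> n"

text \<open>\<open>v\<close> is the mean of the directions \<open>a u + n\<close> and \<open>- b u + n\<close> of the two supporting lines.\<close>
definition "slope = (a - b) / 2"
definition "v = slope *\<^sub>R u + n"

definition "base x = s + x *\<^sub>R (t - s)"
definition "fibre x = {r. 0 \<le> r \<and> base x + r *\<^sub>R v \<in> K}"
definition "height x = Sup (fibre x)"

lemma n_u: "n \<bullet> u = 0"
  using u_n by (simp add: inner_commute)

lemma dist_s_t: "dist s t = L"
proof -
  have "norm (t - s) = L"
    using L_pos u_unit by (simp add: chord norm_eq_sqrt_inner)
  then show ?thesis by (simp add: dist_norm norm_minus_commute)
qed

lemma abscissa_ordinate_between: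
  "x \<in> K \<Longrightarrow> a * ordinate x \<le> abscissa x \<and> abscissa x \<le> L - b * ordinate x"
  using between_supports by (simp add: abscissa_def ordinate_def)

lemma abscissa_base: "abscissa (base x + r *\<^sub>R v) = x * L + r * slope"
  by (simp add: abscissa_def base_def v_def chord inner_add_left u_unit n_u)

lemma ordinate_base: "ordinate (base x + r *\<^sub>R v) = r"
  by (simp add: ordinate_def base_def v_def chord inner_add_left n_unit u_n)

lemma norm_frame: "norm (c *\<^sub>R u + d *\<^sub>R n) = sqrt (c\<^sup>2 + d\<^sup>2)"
proof -
  have "(c *\<^sub>R u + d *\<^sub>R n) \<bullet> (c *\<^sub>R u + d *\<^sub>R n) = c\<^sup>2 + d\<^sup>2"
    by (simp add: inner_add_left inner_add_right u_unit n_unit u_n n_u power2_eq_square)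
  then show ?thesis by (simp add: norm_eq_sqrt_inner)
qed

lemma norm_v: "norm v = sqrt (slope\<^sup>2 + 1)"
  using norm_frame[of slope 1] by (simp add: v_def)

lemma ordinate_diff_le_dist: "ordinate x - ordinate y \<le> dist x y"
proof -
  have "ordinate x - ordinate y = (x - y) \<bullet> n"
    by (simp add: ordinate_def inner_diff_left)
  also have "\<dots> \<le> norm (x - y) * norm n"
    using Cauchy_Schwarz_ineq2 abs_le_iff by blast
  finally show ?thesis
    using n_unit by (simp add: dist_norm norm_eq_sqrt_inner)
qed

lemma dist_le_diameter: "x \<in> K \<Longrightarrow> y \<in> K \<Longrightarrow> dist x y \<le> diameter K"
  using diameter_bounded_bound compact compact_imp_bounded by blast

lemma base_in: "x \<in> {0..1} \<Longrightarrow> base x \<in> K"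
proof -
  assume "x \<in> {0..1}"
  moreover have "base x = (1 - x) *\<^sub>R s + x *\<^sub>R t"
    by (simp add: base_def algebra_simps)
  ultimately show ?thesis
    using convex s_in t_in by (simp add: convex_def)
qed

lemma fibre_le_diameter: "r \<in> fibre x \<Longrightarrow> r \<le> diameter K"
proof -
  assume r: "r \<in> fibre x"
  have "ordinate (base x + r *\<^sub>R v) - ordinate s \<le> dist (base x + r *\<^sub>R v) s"
    by (rule ordinate_diff_le_dist)
  also have "\<dots> \<le> diameter K"
    using r s_in dist_le_diameter by (simp add: fibre_def)
  moreover have "ordinate s = 0"
    by (simp add: ordinate_def)
  ultimately show ?thesis
    by (simp add: ordinate_base)
qed

lemma closed_fibre: "closed (fibre x)"
proof -
  have "closed ((\<lambda>r. base x + r *\<^sub>R v) -` K)"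
    using compact by (intro continuous_closed_vimage) (auto intro!: continuous_intros compact_imp_closed)
  moreover have "fibre x = {0..} \<inter> (\<lambda>r. base x + r *\<^sub>R v) -` K"
    by (auto simp: fibre_def)
  ultimately show ?thesis by auto
qed

lemma
  assumes "x \<in> {0..1}"
  shows height_in_fibre: "height x \<in> fibre x"
    and height_nonneg: "0 \<le> height x"
    and height_le_diameter: "height x \<le> diameter K"
    and fibre_le_height: "r \<in> fibre x \<Longrightarrow> r \<le> height x"
proof -
  have "0 \<in> fibre x"
    using base_in[OF assms] by (simp add: fibre_def)
  moreover have bdd: "bdd_above (fibre x)"
    using fibre_le_diameter by (rule bdd_aboveI)
  ultimately show in_fibre: "height x \<in> fibre x"
    unfolding height_def using closed_contains_Sup closed_fibre by blast
  show "r \<in> fibre x \<Longrightarrow> r \<le> height x"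
    unfolding height_def using bdd by (simp add: cSup_upper)
  show "0 \<le> height x" "height x \<le> diameter K"
    using in_fibre fibre_le_diameter by (auto simp: fibre_def)
qed

lemma top_in: "x \<in> {0..1} \<Longrightarrow> base x + height x *\<^sub>R v \<in> K"
  using height_in_fibre by (simp add: fibre_def)

lemma below_top_in:
  assumes "x \<in> {0..1}" and "0 \<le> r" and "r \<le> height x"
  shows "base x + r *\<^sub>R v \<in> K"
proof (cases "height x = 0")
  case True
  then show ?thesis using assms base_in by simp
next
  case False
  then have h: "0 < height x" using height_nonneg[OF assms(1)] by simp
  have "(1 - r / height x) *\<^sub>R base x + (r / height x) *\<^sub>R (base x + height x *\<^sub>R v) \<in> K"
    using convex base_in[OF assms(1)] top_in[OF assms(1)] assms(2,3) h
    by (simp add: convex_def)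
  moreover have "(1 - r / height x) *\<^sub>R base x + (r / height x) *\<^sub>R (base x + height x *\<^sub>R v)
      = base x + r *\<^sub>R v"
    using h by (simp add: algebra_simps)
  ultimately show ?thesis by simp
qed

lemma height_concave:
  assumes "p \<in> {0..1}" and "q \<in> {0..1}" and "0 \<le> l" and "l \<le> 1"
  shows "(1 - l) * height p + l * height q \<le> height ((1 - l) * p + l * q)"
proof -
  have "(1 - l) * p + l * q \<le> (1 - l) * 1 + l * 1"
    using assms by (intro add_mono mult_left_mono) auto
  then have between: "(1 - l) * p + l * q \<in> {0..1}"
    using assms by auto
  have "(1 - l) *\<^sub>R (base p + height p *\<^sub>R v) + l *\<^sub>R (base q + height q *\<^sub>R v) \<in> K"
    using convex top_in assms by (simp add: convex_def)
  moreover have "(1 - l) *\<^sub>R (base p + height p *\<^sub>R v) + l *\<^sub>R (base q + height q *\<^sub>R v)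
      = base ((1 - l) * p + l * q) + ((1 - l) * height p + l * height q) *\<^sub>R v"
    by (simp add: base_def algebra_simps)
  ultimately have "(1 - l) * height p + l * height q \<in> fibre ((1 - l) * p + l * q)"
    using height_nonneg assms by (simp add: fibre_def)
  then show ?thesis
    using fibre_le_height[OF between] by blast
qed

lemma height_quasiconcave:
  assumes "0 \<le> p" and "p \<le> q" and "q \<le> r" and "r \<le> 1"
  shows "min (height p) (height r) \<le> height q"
proof (cases "p = r")
  case True
  then show ?thesis using assms by auto
next
  case False
  define l where "l = (q - p) / (r - p)"
  have l: "0 \<le> l" "l \<le> 1"
    using assms False by (auto simp: l_def field_simps)
  have "l * (r - p) = q - p"
    using assms False by (simp add: l_def)
  then have "q = (1 - l) * p + l * r"
    by (simp add: algebra_simps)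
  have "min (height p) (height r) = (1 - l) * min (height p) (height r) + l * min (height p) (height r)"
    by (simp add: algebra_simps)
  also have "\<dots> \<le> (1 - l) * height p + l * height r"
    using l by (intro add_mono mult_left_mono) auto
  also have "\<dots> \<le> height q"
    using height_concave[of p r l] assms l \<open>q = (1 - l) * p + l * r\<close> by simp
  finally show ?thesis .
qed

text \<open>Upper semicontinuity of \<open>height\<close> comes from the compactness of \<open>K\<close>, lower semicontinuity
  from concavity: between \<open>x\<^sub>0\<close> and an endpoint \<open>e\<close> the height drops at most linearly.\<close>
lemma height_upper_semicontinuous:
  assumes x0: "x0 \<in> {0..1}" and e: "0 < e"
  obtains d where "0 < d" and "\<And>x. x \<in> {0..1} \<Longrightarrow> dist x x0 < d \<Longrightarrow> height x < height x0 + e"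
proof -
  define C where "C = ({0..1} \<times> {height x0 + e..diameter K}) \<inter> (\<lambda>z. base (fst z) + snd z *\<^sub>R v) -` K"
  have "closed ((\<lambda>z. base (fst z) + snd z *\<^sub>R v) -` K)"
    using compact by (intro continuous_closed_vimage)
      (auto intro!: continuous_intros compact_imp_closed simp: base_def)
  then have "compact C"
    unfolding C_def by (intro compact_Int_closed compact_Times compact_Icc)
  then have "closed (fst ` C)"
    by (intro compact_imp_closed compact_continuous_image continuous_intros)
  moreover have "x0 \<notin> fst ` C"
  proof
    assume "x0 \<in> fst ` C"
    then obtain r where "height x0 + e \<le> r" "base x0 + r *\<^sub>R v \<in> K"
      by (force simp: C_def)
    then show False
      using fibre_le_height[OF x0, of r] height_nonneg[OF x0] e by (simp add: fibre_def)
  qed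
  ultimately obtain d where d: "0 < d" "\<And>y. dist y x0 < d \<Longrightarrow> y \<notin> fst ` C"
    unfolding closed_def open_dist by blast
  show thesis
  proof (rule that[OF d(1)], rule ccontr)
    fix x assume x: "x \<in> {0..1}" "dist x x0 < d" and "\<not> height x < height x0 + e"
    then have "(x, height x) \<in> C"
      using height_le_diameter top_in by (auto simp: C_def)
    then show False
      using d(2)[OF x(2)] by force
  qed
qed

lemma height_drop_le:
  assumes "x0 \<in> {0..1}" and "e \<in> {0..1}" and "x0 \<noteq> e" and "x \<in> closed_segment x0 e"
  shows "height x0 - height x \<le> diameter K * \<bar>x - x0\<bar> / \<bar>e - x0\<bar>"
proof -
  define l where "l = (x - x0) / (e - x0)"
  obtain l' where l': "0 \<le> l'" "l' \<le> 1" "x = (1 - l') *\<^sub>R x0 + l' *\<^sub>R e"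
    using assms(4) by (auto simp: in_segment)
  then have "x - x0 = l' * (e - x0)"
    by (simp add: algebra_simps)
  then have l: "l = l'" "\<bar>x - x0\<bar> / \<bar>e - x0\<bar> = l'"
    using assms(3) l'(1) by (simp_all add: l_def abs_mult)
  have "(1 - l) * height x0 \<le> (1 - l) * height x0 + l * height e"
    using l l' height_nonneg[OF assms(2)] by simp
  also have "\<dots> \<le> height x"
  proof -
    have "x = (1 - l) * x0 + l * e"
      using l l' by simp
    then show ?thesis
      using height_concave[OF assms(1,2), of l] l l' by simp
  qed
  finally have "height x0 - height x \<le> l * height x0"
    by (simp add: algebra_simps)
  also have "\<dots> \<le> l * diameter K"
    using height_le_diameter[OF assms(1)] l l' by (simp add: mult_left_mono)
  finally show ?thesis
    using l by (simp add: mult.commute times_divide_eq_right[symmetric])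
qed

lemma height_lower_semicontinuous:
  assumes x0: "x0 \<in> {0..1}"
  obtains g where "0 < g" and "\<And>x. x \<in> {0..1} \<Longrightarrow> height x0 - height x \<le> diameter K * \<bar>x - x0\<bar> / g"
proof
  define g where "g = min (if 0 < x0 then x0 else 1) (if x0 < 1 then 1 - x0 else 1)"
  show g: "0 < g"
    using x0 by (auto simp: g_def)
  have D: "0 \<le> diameter K"
    using height_nonneg[OF x0] height_le_diameter[OF x0] by linarith
  fix x :: real assume x: "x \<in> {0..1}"
  consider "x = x0" | "x0 < x" | "x < x0" by linarith
  then show "height x0 - height x \<le> diameter K * \<bar>x - x0\<bar> / g"
  proof cases
    case 2
    then have "height x0 - height x \<le> diameter K * \<bar>x - x0\<bar> / \<bar>1 - x0\<bar>"
      using x0 x by (intro height_drop_le) (auto simp: closed_segment_eq_real_ivl)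
    also have "\<dots> \<le> diameter K * \<bar>x - x0\<bar> / g"
      using 2 x g D by (intro divide_left_mono) (auto simp: g_def)
    finally show ?thesis .
  next
    case 3
    then have "height x0 - height x \<le> diameter K * \<bar>x - x0\<bar> / \<bar>0 - x0\<bar>"
      using x0 x by (intro height_drop_le) (auto simp: closed_segment_eq_real_ivl)
    also have "\<dots> \<le> diameter K * \<bar>x - x0\<bar> / g"
      using 3 x g D by (intro divide_left_mono) (auto simp: g_def)
    finally show ?thesis .
  qed simp
qed

lemma continuous_on_height: "continuous_on {0..1} height"
  unfolding continuous_on_iff
proof (intro ballI allI impI)
  fix x0 e :: real assume x0: "x0 \<in> {0..1}" and e: "0 < e"
  obtain d1 where d1: "0 < d1" "\<And>x. x \<in> {0..1} \<Longrightarrow> dist x x0 < d1 \<Longrightarrow> height x < height x0 + e"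
    using height_upper_semicontinuous[OF x0 e] by blast
  obtain g where g: "0 < g" "\<And>x. x \<in> {0..1} \<Longrightarrow> height x0 - height x \<le> diameter K * \<bar>x - x0\<bar> / g"
    using height_lower_semicontinuous[OF x0] by blast
  have D: "0 \<le> diameter K"
    using height_nonneg[OF x0] height_le_diameter[OF x0] by linarith
  define d where "d = min d1 (e * g / (diameter K + 1))"
  show "\<exists>d>0. \<forall>x\<in>{0..1}. dist x x0 < d \<longrightarrow> dist (height x) (height x0) < e"
  proof (intro exI[of _ d] conjI ballI impI)
    show "0 < d"
      using d1 e g D by (simp add: d_def)
    fix x assume x: "x \<in> {0..1}" "dist x x0 < d"
    have "diameter K * \<bar>x - x0\<bar> \<le> (diameter K + 1) * \<bar>x - x0\<bar>"
      by (simp add: algebra_simps)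
    also have "\<dots> < e * g"
      using x(2) D by (simp add: d_def dist_real_def pos_less_divide_eq mult.commute)
    finally have "diameter K * \<bar>x - x0\<bar> / g < e"
      using g by (simp add: pos_divide_less_eq)
    then have "height x0 - height x < e"
      using g(2)[OF x(1)] by linarith
    moreover have "height x < height x0 + e"
      using d1(2)[OF x(1)] x(2) by (simp add: d_def)
    ultimately show "dist (height x) (height x0) < e"
      by (simp add: dist_real_def abs_less_iff)
  qed
qed

lemma closed_K: "closed K"
  using compact by (rule compact_imp_closed)

lemma support_s_in_frontier:
  assumes "x \<in> K" and "abscissa x = a * ordinate x"
  shows "x \<in> frontier K"
proof (rule linear_maximizer_in_frontier[OF closed_K assms(1)])
  have *: "(a *\<^sub>R n - u) \<bullet> (y - s) = a * ordinate y - abscissa y" for y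
    by (simp add: abscissa_def ordinate_def inner_diff_left inner_commute[of u] inner_commute[of n])
  show "a *\<^sub>R n - u \<noteq> 0"
    using u_unit n_u by (auto simp: inner_diff_left)
  show "(a *\<^sub>R n - u) \<bullet> y \<le> (a *\<^sub>R n - u) \<bullet> x" if "y \<in> K" for y
    using abscissa_ordinate_between[OF that] assms(2) *[of x] *[of y] by (simp add: inner_diff_right)
qed

lemma support_t_in_frontier:
  assumes "x \<in> K" and "abscissa x = L - b * ordinate x"
  shows "x \<in> frontier K"
proof (rule linear_maximizer_in_frontier[OF closed_K assms(1)])
  have *: "(u + b *\<^sub>R n) \<bullet> (y - s) = abscissa y + b * ordinate y" for y
    by (simp add: abscissa_def ordinate_def inner_add_left inner_commute[of u] inner_commute[of n])
  have "(u + b *\<^sub>R n) \<bullet> u = 1"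
    using u_unit n_u by (simp add: inner_add_left)
  then show "u + b *\<^sub>R n \<noteq> 0"
    by auto
  show "(u + b *\<^sub>R n) \<bullet> y \<le> (u + b *\<^sub>R n) \<bullet> x" if "y \<in> K" for y
    using abscissa_ordinate_between[OF that] assms(2) *[of x] *[of y] by (simp add: inner_diff_right)
qed

lemma top_in_frontier:
  assumes x: "x \<in> {0..1}"
  shows "base x + height x *\<^sub>R v \<in> frontier K"
proof -
  have "base x + height x *\<^sub>R v \<notin> interior K"
  proof
    assume "base x + height x *\<^sub>R v \<in> interior K"
    then obtain d where "0 < d" "base x + height x *\<^sub>R v + d *\<^sub>R v \<in> K"
      by (rule interior_step_in)
    then have "height x + d \<in> fibre x"
      using height_nonneg[OF x] by (simp add: fibre_def scaleR_add_left add.assoc)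
    then have "height x + d \<le> height x"
      by (rule fibre_le_height[OF x])
    then show False
      using \<open>0 < d\<close> by simp
  qed
  then show ?thesis
    using top_in[OF x] closed_K by (simp add: frontier_def closure_closed)
qed

text \<open>The arc climbs from \<open>s\<close> along \<open>v\<close> to the top of the cap, follows the graph of \<open>height\<close>
  over the chord and descends along \<open>v\<close> to \<open>t\<close>; its parameter \<open>y \<in> [0, duration]\<close> is rescaled to
  \<open>[0, 1]\<close>.\<close>
definition "duration = height 0 + 1 + height 1"
definition "foot y = min 1 (max 0 (y - height 0))"
definition "rise y = height (foot y) - max 0 (height 0 - y) - max 0 (y - height 0 - 1)"
definition "cap_arc x = base (foot (duration * x)) + rise (duration * x) *\<^sub>R v"

lemma duration_ge_1: "1 \<le> duration"
  using height_nonneg[of 0] height_nonneg[of 1] by (simp add: duration_def)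

lemma foot_in_unit: "foot y \<in> {0..1}"
  by (simp add: foot_def)

lemma mono_foot: "mono foot"
  by (rule monoI) (simp add: foot_def)

lemma rise_climb: "y \<le> height 0 \<Longrightarrow> foot y = 0 \<and> rise y = y"
  using height_nonneg[of 0] by (simp add: foot_def rise_def)

lemma rise_top: "height 0 \<le> y \<Longrightarrow> y \<le> height 0 + 1 \<Longrightarrow> foot y = y - height 0 \<and> rise y = height (y - height 0)"
  by (simp add: foot_def rise_def)

lemma rise_descend: "height 0 + 1 \<le> y \<Longrightarrow> foot y = 1 \<and> rise y = height 1 - (y - height 0 - 1)"
  using height_nonneg[of 0] by (simp add: foot_def rise_def)

lemma foot_rise_inj: "foot y = foot z \<Longrightarrow> rise y = rise z \<Longrightarrow> y = z"
proof -
  assume eq: "foot y = foot z" "rise y = rise z"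
  consider "y \<le> height 0" | "height 0 + 1 \<le> y" | "height 0 < y" "y < height 0 + 1"
    by linarith
  then show "y = z"
  proof cases
    case 1
    then have "z \<le> height 0"
      using eq(1) rise_climb by (simp add: foot_def split: if_splits)
    then show ?thesis using 1 eq rise_climb by metis
  next
    case 2
    then have "height 0 + 1 \<le> z"
      using eq(1) rise_descend by (simp add: foot_def split: if_splits)
    then show ?thesis using 2 eq rise_descend by fastforce
  next
    case 3
    then show ?thesis using eq(1) by (simp add: foot_def split: if_splits)
  qed
qed

lemma cap_arc_0: "cap_arc 0 = s"
  using rise_climb[of 0] height_nonneg[of 0] by (simp add: cap_arc_def base_def)

lemma cap_arc_1: "cap_arc 1 = t"
  using rise_descend[of duration] height_nonneg[of 1] by (simp add: cap_arc_def base_def duration_def)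

lemma arc_cap_arc: "arc cap_arc"
  unfolding arc_def path_def
proof
  have "continuous_on {0..1} (\<lambda>x. foot (duration * x))"
    unfolding foot_def by (intro continuous_intros)
  moreover have "continuous_on {0..1} (\<lambda>x. height (foot (duration * x)))"
    by (rule continuous_on_compose2[OF continuous_on_height calculation]) (use foot_in_unit in auto)
  ultimately show "continuous_on {0..1} cap_arc"
    unfolding cap_arc_def rise_def base_def by (intro continuous_intros) auto
  show "inj_on cap_arc {0..1}"
  proof (rule inj_onI)
    fix x y assume "cap_arc x = cap_arc y"
    then have "ordinate (cap_arc x) = ordinate (cap_arc y)" "abscissa (cap_arc x) = abscissa (cap_arc y)"
      by simp_all
    then have "rise (duration * x) = rise (duration * y)" "foot (duration * x) = foot (duration * y)"
      using L_pos by (simp_all add: cap_arc_def ordinate_base abscissa_base)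
    then show "x = y"
      using foot_rise_inj duration_ge_1 by force
  qed
qed

text \<open>A segment from \<open>s\<close> (or \<open>t\<close>) in direction \<open>v\<close> can only lie in \<open>K\<close> along the supporting line
  there, so if \<open>height 0 > 0\<close> then \<open>v\<close> is the direction \<open>a u + n\<close> of the supporting line at \<open>s\<close>.\<close>
lemma climb_on_support:
  assumes "0 \<le> y" and "y \<le> height 0"
  shows "abscissa (base 0 + y *\<^sub>R v) = a * ordinate (base 0 + y *\<^sub>R v)"
proof (cases "y = 0")
  case False
  then have "0 < height 0" using assms by simp
  moreover have "a * height 0 \<le> height 0 * slope"
    using abscissa_ordinate_between[OF top_in[of 0]] by (simp add: abscissa_base ordinate_base)
  ultimately have "slope = a"
    using supports_converge by (simp add: slope_def mult.commute)
  then show ?thesis by (simp add: abscissa_base ordinate_base mult.commute)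
qed (use abscissa_base[of 0 0] ordinate_base[of 0 0] in simp)

lemma descent_on_support:
  assumes "0 \<le> y" and "y \<le> height 1"
  shows "abscissa (base 1 + y *\<^sub>R v) = L - b * ordinate (base 1 + y *\<^sub>R v)"
proof (cases "y = 0")
  case False
  then have "0 < height 1" using assms by simp
  moreover have "L + height 1 * slope \<le> L - b * height 1"
    using abscissa_ordinate_between[OF top_in[of 1]] by (simp add: abscissa_base ordinate_base)
  then have "(a + b) * height 1 \<le> 0"
    by (simp add: slope_def field_simps)
  ultimately have "slope = - b"
    using supports_converge by (simp add: slope_def mult_le_0_iff)
  then show ?thesis by (simp add: abscissa_base ordinate_base mult.commute)
qed (use abscissa_base[of 1 0] ordinate_base[of 1 0] in simp)

lemma cap_arc_in_frontier:
  assumes "x \<in> {0..1}"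
  shows "cap_arc x \<in> frontier K"
proof -
  define y where "y = duration * x"
  have y: "0 \<le> y" "y \<le> duration"
    using assms duration_ge_1 by (auto simp: y_def mult_le_cancel_left1)
  consider "y \<le> height 0" | "height 0 + 1 \<le> y" | "height 0 < y" "y < height 0 + 1"
    by linarith
  then show ?thesis
  proof cases
    case 1
    then have "cap_arc x = base 0 + y *\<^sub>R v"
      using rise_climb by (simp add: cap_arc_def y_def)
    then show ?thesis
      using 1 y below_top_in[of 0 y] climb_on_support[of y] support_s_in_frontier by simp
  next
    case 2
    define y' where "y' = height 1 - (y - height 0 - 1)"
    have y': "0 \<le> y'" "y' \<le> height 1"
      using 2 y by (auto simp: y'_def duration_def)
    have "cap_arc x = base 1 + y' *\<^sub>R v"
      using rise_descend[OF 2] by (simp add: cap_arc_def y_def y'_def)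
    then show ?thesis
      using y' below_top_in[of 1 y'] descent_on_support[of y'] support_t_in_frontier by simp
  next
    case 3
    then have "cap_arc x = base (y - height 0) + height (y - height 0) *\<^sub>R v"
      using rise_top[of y] by (simp add: cap_arc_def y_def)
    then show ?thesis
      using 3 top_in_frontier[of "y - height 0"] by simp
  qed
qed

lemma variation_rise_le:
  assumes "\<And>x. x \<in> {0..1} \<Longrightarrow> height x \<le> R"
    and tt: "tt 0 = 0" "tt m = 1" "\<forall>i<m. tt i \<le> tt (Suc i)"
  shows "(\<Sum>i<m. \<bar>rise (duration * tt (Suc i)) - rise (duration * tt i)\<bar>) \<le> 2 * R"
proof -
  define F where "F x = height (foot (duration * x))" for x
  define A where "A x = - max 0 (height 0 - duration * x)" for x
  define B where "B x = max 0 (duration * x - height 0 - 1)" for x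
  have rise: "rise (duration * x) = F x + A x - B x" for x
    by (simp add: rise_def F_def A_def B_def)
  have "duration * x \<le> duration * y" if "x \<le> y" for x y
    using that duration_ge_1 by (simp add: mult_left_mono)
  then have "mono A" "mono B"
    by (auto intro!: monoI simp: A_def B_def max.coboundedI2)
  note variation_AB = variation_mono[OF tt(3) \<open>mono A\<close>] variation_mono[OF tt(3) \<open>mono B\<close>]
  have variation_F: "(\<Sum>i<m. \<bar>F (tt (Suc i)) - F (tt i)\<bar>) \<le> 2 * R - F (tt 0) - F (tt m)"
  proof (rule variation_quasiconcave_le[OF tt(3)])
    show "\<forall>i\<le>m. tt i \<in> {0..1}"
      using partition_in_unit[OF tt] by blast
    show "min (F x) (F z) \<le> F y" if "0 \<le> x" "x \<le> y" "y \<le> z" "z \<le> 1" for x y z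
      unfolding F_def using that duration_ge_1 foot_in_unit
      by (intro height_quasiconcave monoD[OF mono_foot]) auto
    show "F x \<le> R" for x
      unfolding F_def using assms(1) foot_in_unit by blast
  qed
  have "(\<Sum>i<m. \<bar>rise (duration * tt (Suc i)) - rise (duration * tt i)\<bar>)
      \<le> (\<Sum>i<m. \<bar>F (tt (Suc i)) - F (tt i)\<bar> + \<bar>A (tt (Suc i)) - A (tt i)\<bar> + \<bar>B (tt (Suc i)) - B (tt i)\<bar>)"
    unfolding rise by (intro sum_mono) linarith
  also have "\<dots> \<le> 2 * R"
    using variation_F variation_AB tt(1,2) height_nonneg[of 0] height_nonneg[of 1]
    by (simp add: sum.distrib F_def A_def B_def foot_def duration_def)
  finally show ?thesis .
qed

lemma curve_length_cap_arc:
  assumes "\<And>x. x \<in> {0..1} \<Longrightarrow> height x \<le> R"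
  shows "curve_length cap_arc \<le> ereal (L + norm v * (2 * R))"
proof -
  have "curve_length cap_arc \<le> ereal (dist s t + norm v * (2 * R))"
  proof (rule curve_length_sheared_graph_le[where X = "\<lambda>x. foot (duration * x)"])
    show "cap_arc x = s + foot (duration * x) *\<^sub>R (t - s) + rise (duration * x) *\<^sub>R v" for x
      by (simp add: cap_arc_def base_def)
    show "foot (duration * x) \<le> foot (duration * y)" if "0 \<le> x" "x \<le> y" for x y
      using that duration_ge_1 by (intro monoD[OF mono_foot]) simp
    show "foot (duration * 0) = 0" "foot (duration * 1) = 1"
      using height_nonneg[of 0] height_nonneg[of 1] by (simp_all add: foot_def duration_def)
  qed (rule variation_rise_le[OF assms])
  then show ?thesis by (simp add: dist_s_t)
qed

lemma width_mult_norm_frame_le: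
  assumes "c \<noteq> 0"
    and "\<And>y. y \<in> K \<Longrightarrow> lo \<le> c * abscissa y + d * ordinate y \<and> c * abscissa y + d * ordinate y \<le> hi"
  shows "width K * sqrt (c\<^sup>2 + d\<^sup>2) \<le> hi - lo"
proof -
  define p where "p = c *\<^sub>R u + d *\<^sub>R n"
  have coords: "p \<bullet> (y - s) = c * abscissa y + d * ordinate y" for y
    by (simp add: p_def abscissa_def ordinate_def inner_add_left inner_commute[of u] inner_commute[of n])
  have "p \<noteq> 0"
    using assms(1) norm_frame[of c d] by (auto simp: p_def)
  then have "width K * norm p \<le> (hi + p \<bullet> s) - (lo + p \<bullet> s)"
  proof (rule width_mult_norm_le)
    show "K \<noteq> {}" using s_in by blast
    fix x assume "x \<in> K"
    then show "lo + p \<bullet> s \<le> p \<bullet> x \<and> p \<bullet> x \<le> hi + p \<bullet> s"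
      using assms(2) coords[of x] unfolding inner_diff_right by fastforce
  qed
  then show ?thesis by (simp add: p_def norm_frame)
qed

lemma height_diameter_le_ordinate:
  assumes "tau \<in> {0..1}" and "y \<in> K"
  shows "height tau - diameter K \<le> ordinate y"
proof -
  have "height tau - ordinate y \<le> dist (base tau + height tau *\<^sub>R v) y"
    using ordinate_diff_le_dist[of "base tau + height tau *\<^sub>R v" y] by (simp add: ordinate_base)
  also have "\<dots> \<le> diameter K"
    using dist_le_diameter top_in[OF assms(1)] assms(2) by blast
  finally show ?thesis by simp
qed

lemma norm_v_le: "norm v \<le> sqrt (1 + a\<^sup>2) \<or> norm v \<le> sqrt (1 + b\<^sup>2)"
proof (cases "\<bar>b\<bar> \<le> \<bar>a\<bar>")
  case True
  then have "\<bar>slope\<bar> \<le> \<bar>a\<bar>" by (simp add: slope_def)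
  then show ?thesis by (simp add: norm_v abs_le_square_iff add.commute)
next
  case False
  then have "\<bar>slope\<bar> \<le> \<bar>b\<bar>" by (simp add: slope_def)
  then show ?thesis by (simp add: norm_v abs_le_square_iff add.commute)
qed

text \<open>The cap lies in the triangle cut off by the two supporting lines, whose apex has ordinate
  \<open>L / (a + b)\<close>, and \<open>K\<close> reaches at most \<open>diameter K - R\<close> below the chord, where \<open>R\<close> is the
  height of the cap. So \<open>K\<close> lies in slabs orthogonal to the supporting lines of width
  \<open>E = L + (a + b) (diameter K - R)\<close> in units of their normals, and \<open>R E \<le> L diameter K\<close>.\<close>
lemma height_mult_norm_v_le:
  assumes "tau \<in> {0..1}" and "0 \<le> width K"
  shows "height tau * norm v * width K \<le> diameter K * L"
proof -
  define R where "R = height tau"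
  define E where "E = L + (a + b) * (diameter K - R)"
  have R: "0 \<le> R" "R \<le> diameter K"
    using height_nonneg[OF assms(1)] height_le_diameter[OF assms(1)] by (auto simp: R_def)
  have "(a + b) * R \<le> L"
    using abscissa_ordinate_between[OF top_in[OF assms(1)]]
    by (simp add: R_def abscissa_base ordinate_base slope_def field_simps)
  then have "(a + b) * R * (diameter K - R) \<le> L * (diameter K - R)"
    using R by (intro mult_right_mono) auto
  then have RE: "R * E \<le> diameter K * L"
    by (simp add: E_def algebra_simps)
  have between: "(a + b) * (R - diameter K) \<le> a * ordinate y + b * ordinate y"
    "a * ordinate y \<le> abscissa y" "abscissa y \<le> L - b * ordinate y" if "y \<in> K" for y
    using height_diameter_le_ordinate[OF assms(1) that] supports_converge
      mult_left_mono[of "R - diameter K" "ordinate y" "a + b"] abscissa_ordinate_between[OF that]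
    by (auto simp: R_def distrib_right)
  have "width K * sqrt (1\<^sup>2 + b\<^sup>2) \<le> L - (a + b) * (R - diameter K)"
  proof (rule width_mult_norm_frame_le)
    fix y assume "y \<in> K"
    then show "(a + b) * (R - diameter K) \<le> 1 * abscissa y + b * ordinate y
        \<and> 1 * abscissa y + b * ordinate y \<le> L"
      using between[of y] by simp
  qed simp
  moreover have "width K * sqrt ((- 1)\<^sup>2 + a\<^sup>2) \<le> 0 - ((a + b) * (R - diameter K) - L)"
  proof (rule width_mult_norm_frame_le)
    fix y assume "y \<in> K"
    then show "(a + b) * (R - diameter K) - L \<le> - 1 * abscissa y + a * ordinate y
        \<and> - 1 * abscissa y + a * ordinate y \<le> 0"
      using between[of y] by simp
  qed simp
  ultimately obtain c where "norm v \<le> sqrt (1 + c\<^sup>2)" and "width K * sqrt (1 + c\<^sup>2) \<le> E"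
    using norm_v_le by (auto simp: E_def algebra_simps)
  then have "width K * norm v \<le> E"
    using assms(2) by (meson mult_left_mono order_trans)
  then have "R * (width K * norm v) \<le> R * E"
    using R(1) by (rule mult_left_mono)
  then show ?thesis
    using RE by (simp add: R_def ac_simps)
qed

lemma short_frontier_arc:
  assumes "0 < width K"
  shows "\<exists>g. arc g \<and> path_image g \<subseteq> frontier K \<and> pathstart g = s \<and> pathfinish g = t \<and>
     curve_length g \<le> ereal (L * (1 + 2 * diameter K / width K))"
proof -
  obtain tau where tau: "tau \<in> {0..1}" "\<And>x. x \<in> {0..1} \<Longrightarrow> height x \<le> height tau"
    using continuous_attains_sup[OF compact_Icc _ continuous_on_height] by fastforce
  have "height tau * norm v \<le> diameter K * L / width K"
    using height_mult_norm_v_le[OF tau(1)] assms by (simp add: pos_le_divide_eq)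
  moreover have "L * (1 + 2 * diameter K / width K) = L + 2 * (diameter K * L / width K)"
    using assms by (simp add: field_simps)
  ultimately have "L + norm v * (2 * height tau) \<le> L * (1 + 2 * diameter K / width K)"
    by (simp add: mult.commute)
  then have "curve_length cap_arc \<le> ereal (L * (1 + 2 * diameter K / width K))"
    using curve_length_cap_arc[OF tau(2)] by (simp add: order_trans)
  moreover have "path_image cap_arc \<subseteq> frontier K"
    using cap_arc_in_frontier by (auto simp: path_image_def)
  ultimately show ?thesis
    using arc_cap_arc cap_arc_0 cap_arc_1 by (auto simp: pathstart_def pathfinish_def)
qed

end

section \<open>Geometric dilation\<close>

text \<open>Replacing \<open>n, a, b\<close> by \<open>-n, -a, -b\<close> moves the meeting point of the supporting lines to the
  side \<open>Y > 0\<close>.\<close>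
lemma short_frontier_arc_between_supports:
  fixes K :: "(real^2) set"
  assumes "convex K" and "compact K" and "s \<in> K" and "t \<in> K" and "t - s = L *\<^sub>R u" and "0 < L"
    and "u \<bullet> u = 1" and "n \<bullet> n = 1" and "u \<bullet> n = 0" and "0 < width K"
    and "\<And>x. x \<in> K \<Longrightarrow> a * ((x - s) \<bullet> n) \<le> (x - s) \<bullet> u \<and> (x - s) \<bullet> u \<le> L - b * ((x - s) \<bullet> n)"
  shows "\<exists>g. arc g \<and> path_image g \<subseteq> frontier K \<and> pathstart g = s \<and> pathfinish g = t \<and>
     curve_length g \<le> ereal (L * (1 + 2 * diameter K / width K))"
proof (cases "0 \<le> a + b")
  case True
  then interpret chord_frame K s t u n L a b
    using assms by unfold_locales auto
  show ?thesis using short_frontier_arc[OF assms(10)] .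
next
  case False
  then interpret chord_frame K s t u "- n" L "- a" "- b"
    using assms by unfold_locales auto
  show ?thesis using short_frontier_arc[OF assms(10)] .
qed

lemma supporting_lines_at_chord:
  fixes K :: "'a::euclidean_space set"
  assumes "convex K" and "closed K" and "interior K \<noteq> {}"
    and "s \<in> frontier K" and "t \<in> frontier K"
    and frame: "\<And>p z. p \<bullet> z = (p \<bullet> u) * (z \<bullet> u) + (p \<bullet> n) * (z \<bullet> n)"
    and chord: "t - s = L *\<^sub>R u" and "0 < L" and "u \<bullet> u = 1" and "u \<bullet> n = 0"
    and "x1 \<in> K" and "0 < (x1 - s) \<bullet> n" and "x2 \<in> K" and "(x2 - s) \<bullet> n < 0"
  obtains a b where
    "\<And>y. y \<in> K \<Longrightarrow> a * ((y - s) \<bullet> n) \<le> (y - s) \<bullet> u \<and> (y - s) \<bullet> u \<le> L - b * ((y - s) \<bullet> n)"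
proof -
  have "s \<in> K" "t \<in> K"
    using assms(2,4,5) by (auto simp: frontier_def closure_closed)
  obtain a where a: "\<And>y. y \<in> K \<Longrightarrow> a * ((y - s) \<bullet> n) \<le> (y - s) \<bullet> u"
    by (rule supporting_line_slope[OF assms(1-4) frame \<open>t \<in> K\<close> _ _ assms(11-14)])
      (use assms(8-10) in \<open>auto simp: chord\<close>)
  have shift: "y - t = (y - s) - L *\<^sub>R u" for y
    using chord by (simp add: algebra_simps)
  have t_coords: "(y - t) \<bullet> n = (y - s) \<bullet> n" "(y - t) \<bullet> - u = L - (y - s) \<bullet> u" for y
    unfolding shift using assms(9,10) by (simp_all add: inner_diff_left)
  have frame': "p \<bullet> z = (p \<bullet> - u) * (z \<bullet> - u) + (p \<bullet> n) * (z \<bullet> n)" for p z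
    using frame[of p z] by simp
  obtain b where "\<And>y. y \<in> K \<Longrightarrow> b * ((y - t) \<bullet> n) \<le> (y - t) \<bullet> - u"
    by (rule supporting_line_slope[OF assms(1-3,5) frame' \<open>s \<in> K\<close> _ _ \<open>x1 \<in> K\<close> _ \<open>x2 \<in> K\<close>])
      (use assms(8,12,14) t_coords[of s] t_coords[of x1] t_coords[of x2] in auto)
  then have "(y - s) \<bullet> u \<le> L - b * ((y - s) \<bullet> n)" if "y \<in> K" for y
    using t_coords[of y] that by fastforce
  with a show thesis
    using that by blast
qed

lemma exists_short_frontier_arc:
  fixes K :: "(real^2) set"
  assumes "convex K" and "compact K" and "interior K \<noteq> {}"
    and "s \<in> frontier K" and "t \<in> frontier K" and "s \<noteq> t" and "0 < width K"
  shows "\<exists>g. arc g \<and> path_image g \<subseteq> frontier K \<and> pathstart g = s \<and> pathfinish g = t \<and>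
    curve_length g \<le> ereal (dist s t * (1 + 2 * diameter K / width K))"
proof -
  define L where "L = dist s t"
  have "closed K"
    using assms(2) by (rule compact_imp_closed)
  then have "s \<in> K" "t \<in> K"
    using assms(4,5) by (auto simp: frontier_def closure_closed)
  have L: "0 < L"
    using assms(6) by (simp add: L_def)
  obtain u n where "t - s = L *\<^sub>R u" "u \<bullet> u = 1" "n \<bullet> n = 1" "u \<bullet> n = 0"
    and frame: "\<And>p z. p \<bullet> z = (p \<bullet> u) * (z \<bullet> u) + (p \<bullet> n) * (z \<bullet> n)"
    using chord_coordinates[OF assms(6)] unfolding L_def by metis
  have "n \<bullet> (t - s) = 0"
    using \<open>u \<bullet> n = 0\<close> by (simp add: \<open>t - s = L *\<^sub>R u\<close> inner_commute[of n u])
  then have "n \<bullet> t = n \<bullet> s"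
    by (simp add: inner_diff_right)
  show ?thesis
  proof (cases "(\<forall>x\<in>K. n \<bullet> s \<le> n \<bullet> x) \<or> (\<forall>x\<in>K. (- n) \<bullet> s \<le> (- n) \<bullet> x)")
    case True
    have "n \<noteq> 0" "- n \<noteq> 0"
      using \<open>n \<bullet> n = 1\<close> by auto
    with True have "closed_segment s t \<subseteq> frontier K"
      using closed_segment_subset_frontier[OF \<open>closed K\<close> assms(1) \<open>s \<in> K\<close> \<open>t \<in> K\<close>]
        \<open>n \<bullet> t = n \<bullet> s\<close> by (metis inner_minus_left)
    moreover have "0 \<le> diameter K"
      using diameter_ge_0 compact_imp_bounded assms(2) by blast
    then have "1 \<le> 1 + 2 * diameter K / width K"
      using assms(7) by simp
    then have "dist s t \<le> dist s t * (1 + 2 * diameter K / width K)"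
      by (simp add: mult_le_cancel_left1)
    then have "curve_length (linepath s t) \<le> ereal (dist s t * (1 + 2 * diameter K / width K))"
      using curve_length_linepath_le[of s t] order_trans by fastforce
    ultimately show ?thesis
      using arc_linepath[OF assms(6)] by (intro exI[of _ "linepath s t"]) auto
  next
    case False
    then obtain x1 x2 where "x1 \<in> K" "n \<bullet> s < n \<bullet> x1" "x2 \<in> K" "n \<bullet> x2 < n \<bullet> s"
      by (auto simp: not_le)
    then have "0 < (x1 - s) \<bullet> n" "(x2 - s) \<bullet> n < 0"
      by (simp_all add: inner_commute[of _ n] inner_diff_right)
    then obtain a b where
      "\<And>y. y \<in> K \<Longrightarrow> a * ((y - s) \<bullet> n) \<le> (y - s) \<bullet> u \<and> (y - s) \<bullet> u \<le> L - b * ((y - s) \<bullet> n)"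
      using supporting_lines_at_chord[OF assms(1) \<open>closed K\<close> assms(3-5) frame \<open>t - s = L *\<^sub>R u\<close> L
          \<open>u \<bullet> u = 1\<close> \<open>u \<bullet> n = 0\<close> \<open>x1 \<in> K\<close> _ \<open>x2 \<in> K\<close>] by blast
    from short_frontier_arc_between_supports[OF assms(1,2) \<open>s \<in> K\<close> \<open>t \<in> K\<close> \<open>t - s = L *\<^sub>R u\<close>
        L \<open>u \<bullet> u = 1\<close> \<open>n \<bullet> n = 1\<close> \<open>u \<bullet> n = 0\<close> assms(7) this]
    show ?thesis
      by (simp add: L_def)
  qed
qed

lemma geod_le_curve_length:
  assumes "arc g" and "path_image g \<subseteq> frontier K" and "pathstart g = s" and "pathfinish g = t"
  shows "geod K s t \<le> curve_length g"
  unfolding geod_def using assms by (intro INF_lower) auto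

lemma geometric_dilation_le:
  assumes "convex_body K" and "0 < width K"
  shows "geometric_dilation K \<le> ereal (1 + 2 * diameter K / width K)"
  unfolding geometric_dilation_def
proof (rule SUP_least, clarify)
  fix s t assume "s \<in> frontier K" "t \<in> frontier K" "s \<noteq> t"
  then obtain g where "arc g" "path_image g \<subseteq> frontier K" "pathstart g = s" "pathfinish g = t"
      "curve_length g \<le> ereal (dist s t * (1 + 2 * diameter K / width K))"
    using exists_short_frontier_arc[of K s t] assms by (auto simp: convex_body_def)
  then have "geod K s t \<le> ereal (dist s t) * ereal (1 + 2 * diameter K / width K)"
    using geod_le_curve_length[of g K s t] by (auto simp: order_trans)
  then show "geod K s t / ereal (dist s t) \<le> ereal (1 + 2 * diameter K / width K)"
    using \<open>s \<noteq> t\<close> by (subst ereal_divide_le_pos) (auto simp: mult.commute)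
qed

lemma one_plus_two_div_le:
  assumes "0 < l" and "l \<le> 1"
  shows "1 + 2 / l \<le> min (pi / l) (2 * (1 / l + 1))"
proof -
  have "1 + 2 / l \<le> 3 / l"
    using assms by (simp add: field_simps)
  also have "\<dots> \<le> pi / l"
    using pi_gt3 assms(1) by (simp add: divide_right_mono)
  finally show ?thesis
    by simp
qed

theorem lemma8:
  fixes K :: "(real^2) set" and l :: real
  assumes "convex_body K" and "0 < l" and "l \<le> 1" and "fat l K"
  shows "geometric_dilation K \<le> ereal (min (pi / l) (2 * (1 / l + 1)))"
proof -
  have "0 \<le> diameter K"
    using assms(1) diameter_ge_0 compact_imp_bounded by (auto simp: convex_body_def)
  moreover have l: "l \<le> width K / diameter K"
    using assms(4) by (simp add: fat_def)
  ultimately have "0 < width K / diameter K" "0 \<le> diameter K"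
    using assms(2) by linarith+
  then have D: "0 < diameter K" and w: "0 < width K"
    by (auto simp: zero_less_divide_iff)
  have "diameter K / width K \<le> 1 / l"
    using l D w assms(2) by (simp add: field_simps)
  then have "1 + 2 * diameter K / width K \<le> 1 + 2 / l"
    by simp
  also have "\<dots> \<le> min (pi / l) (2 * (1 / l + 1))"
    using assms(2,3) by (rule one_plus_two_div_le)
  finally show ?thesis
    using geometric_dilation_le[OF assms(1) w] order_trans by fastforce
qed

end
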